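(* Let $f:B_E \to\mathbb C$ be an analytic function and $x\in B_E$. Then $$\|\widetilde \nabla f(x)\| = \sup_{w\in E,\ w\ne 0} \frac{|\langle \nabla f(x), \overline{w}\rangle|\, (1 -\|x\|^2)}{\sqrt{(1 - \|x\|^2) \|w\|^2 + |\langle w,x \rangle|^2}}.$$
   Context: $E$ is a complex Hilbert space of arbitrary dimension with inner product $\langle\cdot,\cdot\rangle$ (linear in the first variable) and open unit ball $B_E$; fix an orthonormal basis $(e_k)$ and set $\overline{z}=\sum_k\overline{z_k}e_k$ for $z=\sum_kz_ke_k$. For analytic $g:B_E\to\mathbb C$, $\nabla g(x)\in E$ is defined by $g'(x)(y)=\langle y,\overline{\nabla g(x)}\rangle$. For $a\in B_E$, $\varphi_a(y)=(s_aQ_a+P_a)\big(\frac{a-y}{1-\langle y,a\rangle}\big)$ with $s_a=\sqrt{1-\|a\|^2}$, $P_a$ the orthogonal projection onto $\mathbb Ca$, $Q_a=I-P_a$ ($\varphi_0(y)=-y$). The invariant gradient is $\widetilde\nabla f(x)=\nabla(f\circ\varphi_x)(0)$. *)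

theory Defs
  imports "HOL-Analysis.Analysis"
begin

text \<open>Complex Hilbert spaces (the distribution has no complex vector space class):
  a real Banach space with a compatible complex scalar multiplication and a complex
  inner product, linear in the first variable, inducing the norm.\<close>

class chilbert_space = real_normed_vector + complete_space +
  fixes scaleC :: "complex \<Rightarrow> 'a \<Rightarrow> 'a" (infixr \<open>*\<^sub>C\<close> 75)
    and cinner :: "'a \<Rightarrow> 'a \<Rightarrow> complex"
  assumes scaleC_add_right: "a *\<^sub>C (x + y) = a *\<^sub>C x + a *\<^sub>C y"
    and scaleC_add_left: "(a + b) *\<^sub>C x = a *\<^sub>C x + b *\<^sub>C x"
    and scaleC_scaleC: "a *\<^sub>C (b *\<^sub>C x) = (a * b) *\<^sub>C x"
    and scaleC_one: "1 *\<^sub>C x = x"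
    and scaleR_scaleC: "r *\<^sub>R x = complex_of_real r *\<^sub>C x"
    and cinner_add_left: "cinner (x + y) z = cinner x z + cinner y z"
    and cinner_scaleC_left: "cinner (c *\<^sub>C x) y = c * cinner x y"
    and cinner_commute: "cinner x y = cnj (cinner y x)"
    and cinner_eq_zero_iff: "cinner x x = 0 \<longleftrightarrow> x = 0"
    and norm_eq_sqrt_cinner: "norm x = sqrt (Re (cinner x x))"

definition orthonormal_basis :: "'a::chilbert_space set \<Rightarrow> bool" where
  "orthonormal_basis B \<longleftrightarrow>
     (\<forall>e\<in>B. \<forall>e'\<in>B. cinner e e' = (if e = e' then 1 else 0)) \<and>
     (\<forall>z. (\<forall>e\<in>B. cinner z e = 0) \<longrightarrow> z = 0)"

definition cconj :: "'a::chilbert_space set \<Rightarrow> 'a \<Rightarrow> 'a" where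
  "cconj B z = infsum (\<lambda>e. cnj (cinner z e) *\<^sub>C e) B"

definition hol_grad :: "'a::chilbert_space set \<Rightarrow> ('a \<Rightarrow> complex) \<Rightarrow> 'a \<Rightarrow> 'a" where
  "hol_grad B g x = (THE v. \<forall>y. frechet_derivative g (at x) y = cinner y (cconj B v))"

text \<open>Orthogonal projection onto the complex line through a (0 if a = 0).\<close>
definition cproj :: "'a::chilbert_space \<Rightarrow> 'a \<Rightarrow> 'a" where
  "cproj a y = (cinner y a / cinner a a) *\<^sub>C a"

text \<open>Moebius automorphism phi_a of the unit ball; phi_0 y = - y.\<close>
definition moebius :: "'a::chilbert_space \<Rightarrow> 'a \<Rightarrow> 'a" where
  "moebius a y = (let u = (1 / (1 - cinner y a)) *\<^sub>C (a - y)
     in complex_of_real (sqrt (1 - (norm a)\<^sup>2)) *\<^sub>C (u - cproj a u) + cproj a u)"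

definition inv_grad :: "'a::chilbert_space set \<Rightarrow> ('a \<Rightarrow> complex) \<Rightarrow> 'a \<Rightarrow> 'a" where
  "inv_grad B f x = hol_grad B (f \<circ> moebius x) 0"

definition analytic_on_ball :: "('a::chilbert_space \<Rightarrow> complex) \<Rightarrow> bool" where
  "analytic_on_ball f \<longleftrightarrow> (\<forall>x. norm x < 1 \<longrightarrow>
     (\<exists>D. (f has_derivative D) (at x) \<and> (\<forall>c y. D (c *\<^sub>C y) = c * D y)))"

end

theory Submission
  imports Defs
begin

text \<open>By the chain rule \<open>\<nabla>\<^sup>~f(x)\<close> represents \<open>f'(x) \<circ> \<phi>\<^sub>x'(0)\<close>, and
  \<open>\<phi>\<^sub>x'(0) = -(s\<^sub>x Q\<^sub>x + P\<^sub>x)(Q\<^sub>x + s\<^sub>x\<^sup>2 P\<^sub>x) = -(s\<^sub>x Q\<^sub>x + s\<^sub>x\<^sup>2 P\<^sub>x)\<close> is self-adjoint. So if \<open>u\<close> represents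
  \<open>f'(x)\<close>, then \<open>\<parallel>\<nabla>\<^sup>~f(x)\<parallel>\<^sup>2 = s\<^sub>x\<^sup>4 \<parallel>P\<^sub>x u\<parallel>\<^sup>2 + s\<^sub>x\<^sup>2 \<parallel>Q\<^sub>x u\<parallel>\<^sup>2\<close>. The radicand in the supremum is
  \<open>\<parallel>P\<^sub>x w\<parallel>\<^sup>2 + s\<^sub>x\<^sup>2 \<parallel>Q\<^sub>x w\<parallel>\<^sup>2\<close>, so the supremum is \<open>s\<^sub>x\<^sup>2\<close> times the dual norm of \<open>u\<close> for this
  Hilbert norm; by Cauchy-Schwarz
  on each of the two components it is at most \<open>\<parallel>\<nabla>\<^sup>~f(x)\<parallel>\<close>, with equality at
  \<open>w = P\<^sub>x u + s\<^sub>x\<^sup>-\<^sup>2 Q\<^sub>x u\<close>.\<close>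

section \<open>Complex inner product spaces\<close>

lemma scaleC_zero_left [simp]: "0 *\<^sub>C x = 0"
proof -
  have "0 *\<^sub>C x = 0 *\<^sub>C x + 0 *\<^sub>C x" using scaleC_add_left[of 0 0 x] by simp
  then show ?thesis by simp
qed

lemma scaleC_zero_right [simp]: "a *\<^sub>C 0 = 0"
proof -
  have "a *\<^sub>C 0 = a *\<^sub>C 0 + a *\<^sub>C 0" using scaleC_add_right[of a 0 0] by simp
  then show ?thesis by simp
qed

lemma scaleC_minus_left: "(- a) *\<^sub>C x = - (a *\<^sub>C x)"
  using scaleC_add_left[of a "-a" x] by (simp add: minus_unique)

lemma scaleC_minus_right: "a *\<^sub>C (- x) = - (a *\<^sub>C x)"
  using scaleC_add_right[of a x "-x"] by (simp add: minus_unique)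

lemma scaleC_diff_left: "(a - b) *\<^sub>C x = a *\<^sub>C x - b *\<^sub>C x"
  using scaleC_add_left[of a "-b" x] by (simp add: scaleC_minus_left)

lemma scaleC_diff_right: "a *\<^sub>C (x - y) = a *\<^sub>C x - a *\<^sub>C y"
  using scaleC_add_right[of a x "-y"] by (simp add: scaleC_minus_right)

lemma cinner_zero_left [simp]: "cinner 0 y = 0"
  using cinner_add_left[of 0 0 y] by simp

lemma cinner_zero_right [simp]: "cinner x 0 = 0"
  using cinner_commute[of x 0] by simp

lemma cinner_add_right: "cinner x (y + z) = cinner x y + cinner x z"
  by (metis cinner_add_left cinner_commute complex_cnj_add)

lemma cinner_scaleC_right: "cinner x (c *\<^sub>C y) = cnj c * cinner x y"
  by (metis cinner_scaleC_left cinner_commute complex_cnj_mult)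

lemma cinner_minus_left: "cinner (- x) y = - cinner x y"
  using cinner_add_left[of x "-x" y] by (simp add: minus_unique)

lemma cinner_minus_right: "cinner x (- y) = - cinner x y"
  by (metis cinner_commute cinner_minus_left complex_cnj_minus)

lemma cinner_diff_left: "cinner (x - y) z = cinner x z - cinner y z"
  using cinner_add_left[of x "-y" z] by (simp add: cinner_minus_left)

lemma cinner_diff_right: "cinner x (y - z) = cinner x y - cinner x z"
  using cinner_add_right[of x y "-z"] by (simp add: cinner_minus_right)

lemma cinner_sum_left: "cinner (\<Sum>i\<in>F. f i) z = (\<Sum>i\<in>F. cinner (f i) z)"
  by (induction F rule: infinite_finite_induct) (auto simp: cinner_add_left)

lemma cinner_sum_right: "cinner z (\<Sum>i\<in>F. f i) = (\<Sum>i\<in>F. cinner z (f i))"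
  by (induction F rule: infinite_finite_induct) (auto simp: cinner_add_right)

lemma cinner_self_eq_power2_norm: "cinner x x = complex_of_real ((norm x)\<^sup>2)"
proof -
  have "Im (cinner x x) = 0"
    using cinner_commute[of x x] by (metis Reals_cnj_iff complex_is_Real_iff)
  moreover have "Re (cinner x x) \<ge> 0"
    using norm_eq_sqrt_cinner[of x] by (metis norm_ge_zero real_sqrt_lt_0_iff not_less)
  ultimately show ?thesis
    using norm_eq_sqrt_cinner[of x] by (simp add: complex_eq_iff)
qed

lemma power2_norm_eq_cinner: "(norm x)\<^sup>2 = Re (cinner x x)"
  by (simp add: cinner_self_eq_power2_norm)

lemma norm_scaleC: "norm (c *\<^sub>C x) = cmod c * norm x"
proof -
  have "cinner (c *\<^sub>C x) (c *\<^sub>C x) = (c * cnj c) * cinner x x"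
    by (simp add: cinner_scaleC_left cinner_scaleC_right mult.assoc)
  then have "(norm (c *\<^sub>C x))\<^sup>2 = Re ((c * cnj c) * cinner x x)"
    by (simp only: power2_norm_eq_cinner)
  also have "\<dots> = (cmod c * norm x)\<^sup>2"
    by (simp only: complex_norm_square[symmetric] cinner_self_eq_power2_norm Re_complex_of_real
        flip: of_real_mult) (simp add: power_mult_distrib)
  finally show ?thesis by (simp add: power2_eq_iff_nonneg)
qed

lemma Cauchy_Schwarz_cinner: "cmod (cinner x y) \<le> norm x * norm y"
proof (cases "y = 0")
  case False
  define c where "c = cinner x y"
  define t where "t = c / complex_of_real ((norm y)\<^sup>2)"
  have ny: "norm y > 0" using False by simp
  have "0 \<le> (norm (x - t *\<^sub>C y))\<^sup>2" by simp
  also have "\<dots> = Re (cinner x x - cnj t * c - t * cnj c + t * cnj t * cinner y y)"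
    by (simp add: power2_norm_eq_cinner cinner_diff_left cinner_diff_right cinner_scaleC_left
        cinner_scaleC_right c_def cinner_commute[of y x] algebra_simps)
  also have "cinner x x - cnj t * c - t * cnj c + t * cnj t * cinner y y
      = cinner x x - c * cnj c / complex_of_real ((norm y)\<^sup>2)"
    using ny by (simp add: t_def cinner_self_eq_power2_norm field_simps)
  also have "c * cnj c / complex_of_real ((norm y)\<^sup>2) = of_real ((cmod c)\<^sup>2 / (norm y)\<^sup>2)"
    by (simp only: complex_norm_square[symmetric] of_real_divide)
  finally have "(cmod c)\<^sup>2 / (norm y)\<^sup>2 \<le> (norm x)\<^sup>2"
    by (simp add: cinner_self_eq_power2_norm)
  then have "(cmod c)\<^sup>2 \<le> (norm x * norm y)\<^sup>2"
    using ny by (simp add: field_simps power_mult_distrib)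
  then show ?thesis unfolding c_def by (simp add: power2_le_iff_abs_le)
qed simp

lemma bounded_bilinear_cinner: "bounded_bilinear cinner"
proof -
  have "\<exists>K. \<forall>a b. cmod (cinner a b) \<le> norm a * norm b * K"
    by (rule exI[of _ 1]) (simp add: Cauchy_Schwarz_cinner)
  then show ?thesis
    by (intro bounded_bilinear.intro)
       (auto simp: cinner_add_left cinner_add_right scaleR_scaleC cinner_scaleC_left
         cinner_scaleC_right scaleR_conv_of_real)
qed

lemma bounded_bilinear_scaleC: "bounded_bilinear (\<lambda>c x. c *\<^sub>C x)"
proof -
  have "\<exists>K. \<forall>a b. norm (a *\<^sub>C b) \<le> norm a * norm b * K"
    by (rule exI[of _ 1]) (simp add: norm_scaleC)
  then show ?thesis
    by (intro bounded_bilinear.intro)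
       (auto simp: scaleC_add_left scaleC_add_right scaleR_scaleC scaleC_scaleC
         scaleR_conv_of_real mult.commute)
qed

lemmas bounded_linear_cinner_left = bounded_bilinear.bounded_linear_left[OF bounded_bilinear_cinner]
lemmas bounded_linear_cinner_right = bounded_bilinear.bounded_linear_right[OF bounded_bilinear_cinner]

section \<open>Orthonormal systems\<close>

lemma summable_on_Cauchy_criterion:
  fixes f :: "'i \<Rightarrow> 'b::{real_normed_vector, complete_space}"
  assumes tail: "\<And>e. e > 0 \<Longrightarrow>
    \<exists>F0. finite F0 \<and> F0 \<subseteq> A \<and> (\<forall>H. finite H \<longrightarrow> H \<subseteq> A - F0 \<longrightarrow> norm (sum f H) < e)"
  shows "f summable_on A"
proof -
  have "\<exists>P. eventually P (finite_subsets_at_top A) \<and>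
          (\<forall>F1 F2. P F1 \<and> P F2 \<longrightarrow> dist (sum f F1) (sum f F2) < e)" if "e > 0" for e
  proof -
    obtain F0 where F0: "finite F0" "F0 \<subseteq> A"
      and small: "\<And>H. finite H \<Longrightarrow> H \<subseteq> A - F0 \<Longrightarrow> norm (sum f H) < e/2"
      using tail[of "e/2"] \<open>e > 0\<close> by auto
    define P where "P F \<longleftrightarrow> finite F \<and> F0 \<subseteq> F \<and> F \<subseteq> A" for F
    have "eventually P (finite_subsets_at_top A)"
      unfolding P_def eventually_finite_subsets_at_top using F0 by blast
    moreover have "dist (sum f F1) (sum f F2) < e" if "P F1" "P F2" for F1 F2
    proof -
      have "sum f F1 - sum f F2 = sum f (F1 - F2) - sum f (F2 - F1)"
        using that sum.Int_Diff[of F1 f F2] sum.Int_Diff[of F2 f F1]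
        by (simp add: P_def Int_commute)
      then have "dist (sum f F1) (sum f F2) \<le> norm (sum f (F1 - F2)) + norm (sum f (F2 - F1))"
        by (simp add: dist_norm norm_triangle_ineq4)
      also have "\<dots> < e/2 + e/2"
        using that by (intro add_strict_mono small) (auto simp: P_def)
      finally show ?thesis by simp
    qed
    ultimately show ?thesis by blast
  qed
  then have "cauchy_filter (filtermap (sum f) (finite_subsets_at_top A))"
    by (simp add: cauchy_filter_metric_filtermap)
  moreover have "complete (UNIV :: 'b set)"
    by (meson Cauchy_convergent UNIV_I complete_def convergent_def)
  ultimately obtain L where "(sum f \<longlongrightarrow> L) (finite_subsets_at_top A)"
    using complete_uniform[where S=UNIV] by (force simp add: filterlim_def)
  then show ?thesis
    unfolding summable_on_def has_sum_def by blast
qed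

lemma summable_on_if_norm_sum_square_le:
  fixes f :: "'i \<Rightarrow> 'b::{real_normed_vector, complete_space}" and g :: "'i \<Rightarrow> real"
  assumes "g summable_on A" and "\<And>x. x \<in> A \<Longrightarrow> g x \<ge> 0"
    and norm_sum: "\<And>H. finite H \<Longrightarrow> H \<subseteq> A \<Longrightarrow> (norm (sum f H))\<^sup>2 \<le> sum g H"
  shows "f summable_on A"
proof (rule summable_on_Cauchy_criterion)
  fix e :: real assume "e > 0"
  obtain F0 where F0: "finite F0" "F0 \<subseteq> A" "dist (sum g F0) (infsum g A) \<le> (e/2)\<^sup>2"
    using infsum_finite_approximation[OF assms(1), of "(e/2)\<^sup>2"] \<open>e > 0\<close> by auto
  have "norm (sum f H) < e" if H: "finite H" "H \<subseteq> A - F0" for H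
  proof -
    have "sum g F0 + sum g H = sum g (F0 \<union> H)"
      using H F0 by (subst sum.union_disjoint) auto
    also have "\<dots> \<le> infsum g A"
      using H F0 assms by (intro finite_sum_le_infsum) auto
    finally have "sum g H \<le> (e/2)\<^sup>2"
      using F0(3) by (auto simp: dist_real_def)
    then have "(norm (sum f H))\<^sup>2 \<le> (e/2)\<^sup>2"
      using norm_sum[of H] H by (meson Diff_subset order.trans)
    then have "norm (sum f H) \<le> e/2"
      using \<open>e > 0\<close> by (simp add: power2_le_iff_abs_le)
    then show ?thesis using \<open>e > 0\<close> by simp
  qed
  then show "\<exists>F0. finite F0 \<and> F0 \<subseteq> A \<and> (\<forall>H. finite H \<longrightarrow> H \<subseteq> A - F0 \<longrightarrow> norm (sum f H) < e)"
    using F0 by blast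
qed

definition orthonormal :: "'a::chilbert_space set \<Rightarrow> bool" where
  "orthonormal B \<longleftrightarrow> (\<forall>e\<in>B. \<forall>e'\<in>B. cinner e e' = (if e = e' then 1 else 0))"

lemma orthonormal_basis_imp_orthonormal: "orthonormal_basis B \<Longrightarrow> orthonormal B"
  by (simp add: orthonormal_basis_def orthonormal_def)

lemma cinner_sum_orthonormal:
  assumes "orthonormal B" "finite F" "F \<subseteq> B" "e' \<in> B"
  shows "cinner (\<Sum>e\<in>F. c e *\<^sub>C e) e' = (if e' \<in> F then c e' else 0)"
proof -
  have "cinner (\<Sum>e\<in>F. c e *\<^sub>C e) e' = (\<Sum>e\<in>F. c e * cinner e e')"
    by (simp add: cinner_sum_left cinner_scaleC_left)
  also have "\<dots> = (\<Sum>e\<in>F. if e = e' then c e else 0)"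
    using assms by (intro sum.cong) (auto simp: orthonormal_def)
  finally show ?thesis using assms(2) by simp
qed

lemma power2_norm_sum_orthonormal:
  assumes "orthonormal B" "finite F" "F \<subseteq> B"
  shows "(norm (\<Sum>e\<in>F. c e *\<^sub>C e))\<^sup>2 = (\<Sum>e\<in>F. (cmod (c e))\<^sup>2)"
proof -
  let ?v = "\<Sum>e\<in>F. c e *\<^sub>C e"
  have "cinner ?v ?v = (\<Sum>e\<in>F. cnj (c e) * cinner ?v e)"
    by (simp add: cinner_sum_right cinner_scaleC_right)
  also have "\<dots> = (\<Sum>e\<in>F. cnj (c e) * c e)"
    by (intro sum.cong refl) (simp add: cinner_sum_orthonormal[OF assms] subsetD[OF assms(3)])
  also have "\<dots> = (\<Sum>e\<in>F. complex_of_real ((cmod (c e))\<^sup>2))"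
    by (intro sum.cong refl) (subst complex_norm_square, rule mult.commute)
  finally show ?thesis by (simp add: power2_norm_eq_cinner)
qed

lemma Bessel_inequality:
  assumes "orthonormal B" "finite F" "F \<subseteq> B"
  shows "(\<Sum>e\<in>F. (cmod (cinner z e))\<^sup>2) \<le> (norm z)\<^sup>2"
proof -
  define v where "v = (\<Sum>e\<in>F. cinner z e *\<^sub>C e)"
  have "cinner z v = (\<Sum>e\<in>F. cnj (cinner z e) * cinner z e)"
    by (simp add: v_def cinner_sum_right cinner_scaleC_right)
  also have "\<dots> = (\<Sum>e\<in>F. cnj (cinner z e) * cinner v e)"
    unfolding v_def
    by (intro sum.cong refl) (simp add: cinner_sum_orthonormal[OF assms] subsetD[OF assms(3)])
  also have "\<dots> = cinner v v"
    by (simp add: v_def cinner_sum_right cinner_scaleC_right)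
  finally have zv: "cinner (z - v) v = 0" and vz: "cinner v (z - v) = 0"
    by (simp_all add: cinner_diff_left cinner_diff_right cinner_commute[of v z]
        cinner_self_eq_power2_norm)
  have "(norm z)\<^sup>2 = Re (cinner ((z - v) + v) ((z - v) + v))"
    by (simp add: power2_norm_eq_cinner)
  also have "\<dots> = (norm (z - v))\<^sup>2 + (norm v)\<^sup>2"
    by (simp only: cinner_add_left cinner_add_right zv vz power2_norm_eq_cinner) simp
  finally show ?thesis
    using power2_norm_sum_orthonormal[OF assms, of "cinner z"] by (simp add: v_def)
qed

lemma orthonormal_summable_on:
  assumes ON: "orthonormal B"
    and bound: "\<And>F. finite F \<Longrightarrow> F \<subseteq> B \<Longrightarrow> (\<Sum>e\<in>F. (cmod (c e))\<^sup>2) \<le> K"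
  shows "(\<lambda>e. c e *\<^sub>C e) summable_on B"
proof (rule summable_on_if_norm_sum_square_le)
  show "(\<lambda>e. (cmod (c e))\<^sup>2) summable_on B"
    by (rule nonneg_bdd_above_summable_on) (use bound in \<open>auto simp: bdd_above_def\<close>)
qed (simp_all add: power2_norm_sum_orthonormal[OF ON])

lemma has_sum_orthonormal_coeff:
  assumes "orthonormal B" "((\<lambda>e. c e *\<^sub>C e) has_sum S) B" "e' \<in> B"
  shows "cinner S e' = c e'"
proof -
  have "((\<lambda>e. cinner (c e *\<^sub>C e) e') has_sum cinner S e') B"
    by (rule has_sum_bounded_linear[OF bounded_linear_cinner_left assms(2)])
  moreover have "((\<lambda>e. cinner (c e *\<^sub>C e) e') has_sum c e') B"
  proof -
    have "((\<lambda>e. cinner (c e *\<^sub>C e) e') has_sum c e') B \<longleftrightarrow> (c has_sum c e') {e'}"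
      by (rule has_sum_cong_neutral) (use assms in \<open>auto simp: orthonormal_def cinner_scaleC_left\<close>)
    then show ?thesis using has_sum_finite[of "{e'}" c] by simp
  qed
  ultimately show ?thesis using has_sum_unique by blast
qed

lemma orthonormal_basis_eqI:
  assumes "orthonormal_basis B" "\<And>e. e \<in> B \<Longrightarrow> cinner u e = cinner v e"
  shows "u = v"
  using assms unfolding orthonormal_basis_def
  by (metis cinner_diff_left diff_eq_diff_eq diff_self)

lemma has_sum_orthonormal_basis_expansion:
  assumes B: "orthonormal_basis B"
  shows "((\<lambda>e. cinner z e *\<^sub>C e) has_sum z) B"
proof -
  note ON = orthonormal_basis_imp_orthonormal[OF B]
  have "(\<lambda>e. cinner z e *\<^sub>C e) summable_on B"
    by (rule orthonormal_summable_on[OF ON, of _ "(norm z)\<^sup>2"]) (rule Bessel_inequality[OF ON])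
  then obtain S where S: "((\<lambda>e. cinner z e *\<^sub>C e) has_sum S) B"
    unfolding summable_on_def by blast
  have "S = z"
    by (rule orthonormal_basis_eqI[OF B has_sum_orthonormal_coeff[OF ON S]])
  then show ?thesis using S by simp
qed

lemma has_sum_cconj:
  assumes "orthonormal_basis B"
  shows "((\<lambda>e. cnj (cinner z e) *\<^sub>C e) has_sum cconj B z) B"
proof -
  note ON = orthonormal_basis_imp_orthonormal[OF assms]
  have "(\<lambda>e. cnj (cinner z e) *\<^sub>C e) summable_on B"
    by (rule orthonormal_summable_on[OF ON, of _ "(norm z)\<^sup>2"]) (simp add: Bessel_inequality[OF ON])
  then show ?thesis unfolding cconj_def by (simp add: summable_iff_has_sum_infsum)
qed

lemma cinner_cconj_basis:
  assumes "orthonormal_basis B" "e \<in> B"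
  shows "cinner (cconj B z) e = cnj (cinner z e)"
  by (rule has_sum_orthonormal_coeff[OF orthonormal_basis_imp_orthonormal has_sum_cconj])
     (use assms in auto)

lemma cconj_cconj:
  assumes "orthonormal_basis B"
  shows "cconj B (cconj B z) = z"
  by (rule orthonormal_basis_eqI[OF assms]) (simp add: cinner_cconj_basis[OF assms])

lemma cinner_cconj:
  assumes B: "orthonormal_basis B"
  shows "cinner (cconj B a) (cconj B b) = cinner b a"
proof -
  have "((\<lambda>e. cinner (cconj B a) (cnj (cinner b e) *\<^sub>C e)) has_sum cinner (cconj B a) (cconj B b)) B"
    by (rule has_sum_bounded_linear[OF bounded_linear_cinner_right has_sum_cconj[OF B]])
  moreover have "((\<lambda>e. cinner (cinner b e *\<^sub>C e) a) has_sum cinner b a) B"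
    by (rule has_sum_bounded_linear[OF bounded_linear_cinner_left
          has_sum_orthonormal_basis_expansion[OF B]])
  moreover have "cinner (cconj B a) (cnj (cinner b e) *\<^sub>C e) = cinner (cinner b e *\<^sub>C e) a"
    if "e \<in> B" for e
    using that by (simp add: cinner_scaleC_left cinner_scaleC_right cinner_cconj_basis[OF B]
        cinner_commute[of _ a])
  ultimately show ?thesis
    using has_sum_cong has_sum_unique by (metis (no_types, lifting))
qed

lemma norm_cconj:
  assumes "orthonormal_basis B"
  shows "norm (cconj B z) = norm z"
proof -
  have "(norm (cconj B z))\<^sup>2 = (norm z)\<^sup>2"
    by (simp add: power2_norm_eq_cinner cinner_cconj[OF assms])
  then show ?thesis by (simp add: power2_eq_iff_nonneg)
qed

lemma Bessel_inequality_functional: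
  fixes D :: "'a::chilbert_space \<Rightarrow> complex"
  assumes ON: "orthonormal B" and F: "finite F" "F \<subseteq> B"
    and "linear D" and hom: "\<And>c y. D (c *\<^sub>C y) = c * D y"
    and "K > 0" and K: "\<And>x. norm (D x) \<le> norm x * K"
  shows "(\<Sum>e\<in>F. (cmod (D e))\<^sup>2) \<le> K\<^sup>2"
proof -
  define S where "S = (\<Sum>e\<in>F. (cmod (D e))\<^sup>2)"
  define v where "v = (\<Sum>e\<in>F. cnj (D e) *\<^sub>C e)"
  have "D v = (\<Sum>e\<in>F. cnj (D e) * D e)"
    by (simp add: v_def linear_sum[OF \<open>linear D\<close>] hom)
  also have "\<dots> = of_real S"
    unfolding S_def of_real_sum
    by (intro sum.cong refl) (subst complex_norm_square, rule mult.commute)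
  finally have Dv: "D v = of_real S" .
  have S0: "S \<ge> 0" by (simp add: S_def sum_nonneg)
  have "norm v = sqrt S"
    using power2_norm_sum_orthonormal[OF ON F, of "\<lambda>e. cnj (D e)"]
    by (simp add: v_def S_def real_sqrt_unique)
  then have "S \<le> sqrt S * K"
    using K[of v] Dv S0 by simp
  then have "sqrt S * sqrt S \<le> sqrt S * K"
    using S0 by (simp add: real_sqrt_mult_self)
  then have "sqrt S \<le> K"
  proof (cases "S = 0")
    case False
    then have "sqrt S > 0" using S0 by simp
    then show ?thesis by (rule mult_left_le_imp_le[OF \<open>sqrt S * sqrt S \<le> sqrt S * K\<close>])
  qed (use \<open>K > 0\<close> in simp)
  then show ?thesis
    using S0 power_mono[OF \<open>sqrt S \<le> K\<close>, of 2] by (simp add: S_def)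
qed

lemma complex_linear_functional_representation:
  fixes D :: "'a::chilbert_space \<Rightarrow> complex" and B :: "'a set"
  assumes B: "orthonormal_basis B" and bl: "bounded_linear D"
    and hom: "\<And>c y. D (c *\<^sub>C y) = c * D y"
  obtains u where "\<And>y. D y = cinner y u"
proof -
  note ON = orthonormal_basis_imp_orthonormal[OF B]
  obtain K where "K > 0" and K: "\<And>x. norm (D x) \<le> norm x * K"
    using bounded_linear.pos_bounded[OF bl] by blast
  have "(\<lambda>e. cnj (D e) *\<^sub>C e) summable_on B"
    using Bessel_inequality_functional[OF ON _ _ bounded_linear.linear[OF bl] hom \<open>K > 0\<close> K]
    by (intro orthonormal_summable_on[OF ON]) simp
  then obtain u where u: "((\<lambda>e. cnj (D e) *\<^sub>C e) has_sum u) B"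
    unfolding summable_on_def ..
  have "D y = cinner y u" for y
  proof -
    have "D (cinner y e *\<^sub>C e) = cinner y (cnj (D e) *\<^sub>C e)" for e
      by (simp add: hom cinner_scaleC_right mult.commute)
    moreover have "((\<lambda>e. cinner y (cnj (D e) *\<^sub>C e)) has_sum cinner y u) B"
      by (rule has_sum_bounded_linear[OF bounded_linear_cinner_right u])
    ultimately have "((\<lambda>e. D (cinner y e *\<^sub>C e)) has_sum cinner y u) B"
      by simp
    moreover have "((\<lambda>e. D (cinner y e *\<^sub>C e)) has_sum D y) B"
      by (rule has_sum_bounded_linear[OF bl has_sum_orthonormal_basis_expansion[OF B]])
    ultimately show ?thesis
      using has_sum_unique by blast
  qed
  then show thesis by (rule that)
qed

lemma hol_grad_eqI:
  assumes B: "orthonormal_basis B" and "(g has_derivative (\<lambda>y. cinner y u)) (at x)"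
  shows "hol_grad B g x = cconj B u"
  unfolding hol_grad_def frechet_derivative_at[OF assms(2), symmetric]
proof (rule the_equality)
  fix v assume "\<forall>y. cinner y u = cinner y (cconj B v)"
  then have "cinner (u - cconj B v) (u - cconj B v) = 0"
    by (simp add: cinner_diff_right)
  then show "v = cconj B u" by (simp add: cinner_eq_zero_iff cconj_cconj[OF B])
qed (simp add: cconj_cconj[OF B])

section \<open>Orthogonal projection onto a complex line\<close>

lemma cinner_cproj_left: "cinner (cproj a y) z = cinner y (cproj a z)"
  by (simp add: cproj_def cinner_scaleC_left cinner_scaleC_right cinner_self_eq_power2_norm
      cinner_commute[of z a])

lemma cinner_cproj_self: "cinner (cproj a y) a = cinner y a"
  by (cases "a = 0") (simp_all add: cproj_def cinner_scaleC_left cinner_eq_zero_iff)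

lemma cproj_cproj [simp]: "cproj a (cproj a y) = cproj a y"
  by (simp add: cproj_def cinner_scaleC_left cinner_cproj_self[unfolded cproj_def])

lemma cproj_self [simp]: "cproj a a = a"
  by (cases "a = 0") (simp_all add: cproj_def cinner_eq_zero_iff scaleC_one)

lemma cproj_add: "cproj a (y + z) = cproj a y + cproj a z"
  by (simp add: cproj_def cinner_add_left add_divide_distrib scaleC_add_left)

lemma cproj_diff: "cproj a (y - z) = cproj a y - cproj a z"
  by (simp add: cproj_def cinner_diff_left diff_divide_distrib scaleC_diff_left)

lemma cproj_scaleC: "cproj a (c *\<^sub>C y) = c *\<^sub>C cproj a y"
  by (simp add: cproj_def cinner_scaleC_left scaleC_scaleC)

lemma cproj_diff_cproj [simp]: "cproj a (y - cproj a y) = 0"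
  by (simp add: cproj_diff)

lemma cinner_cproj_diff_cproj: "cinner (cproj a y) (z - cproj a z) = 0"
  by (simp add: cinner_cproj_left)

lemma cinner_diff_cproj_cproj: "cinner (y - cproj a y) (cproj a z) = 0"
  by (simp add: cinner_cproj_left[symmetric])

lemma scaleC_cinner_eq_cproj: "cinner y a *\<^sub>C a = complex_of_real ((norm a)\<^sup>2) *\<^sub>C cproj a y"
  by (cases "a = 0") (simp_all add: cproj_def scaleC_scaleC cinner_self_eq_power2_norm)

lemma bounded_linear_cproj: "bounded_linear (cproj a)"
proof -
  have "bounded_linear (\<lambda>y. (cinner y a / cinner a a) *\<^sub>C a)"
    by (rule bounded_linear_compose[OF bounded_bilinear.bounded_linear_left[OF bounded_bilinear_scaleC]])
       (rule bounded_linear_compose[OF bounded_linear_divide bounded_linear_cinner_left])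
  then show ?thesis by (simp add: cproj_def[abs_def])
qed

lemma power2_norm_mult_cproj: "(norm a)\<^sup>2 * (norm (cproj a w))\<^sup>2 = (cmod (cinner w a))\<^sup>2"
proof (cases "a = 0")
  case False
  have "norm (cproj a w) = cmod (cinner w a) / (norm a)\<^sup>2 * norm a"
    by (simp add: cproj_def norm_scaleC norm_divide cinner_self_eq_power2_norm norm_power)
  then show ?thesis using False by (simp add: field_simps power2_eq_square)
qed (simp add: cproj_def)

lemma cinner_cproj_split:
  "cinner w u = cinner (cproj a w) (cproj a u) + cinner (w - cproj a w) (u - cproj a u)"
proof -
  have "cinner w u = cinner (cproj a w + (w - cproj a w)) (cproj a u + (u - cproj a u))"
    by simp
  then show ?thesis
    by (simp only: cinner_add_left cinner_add_right cinner_cproj_diff_cproj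
        cinner_diff_cproj_cproj) simp
qed

lemma power2_norm_cproj_split:
  "(norm (\<alpha> *\<^sub>C cproj a y + \<beta> *\<^sub>C (z - cproj a z)))\<^sup>2 =
     (cmod \<alpha>)\<^sup>2 * (norm (cproj a y))\<^sup>2 + (cmod \<beta>)\<^sup>2 * (norm (z - cproj a z))\<^sup>2"
proof -
  have "(norm (\<alpha> *\<^sub>C cproj a y + \<beta> *\<^sub>C (z - cproj a z)))\<^sup>2 =
      Re (cinner (\<alpha> *\<^sub>C cproj a y) (\<alpha> *\<^sub>C cproj a y)
        + cinner (\<beta> *\<^sub>C (z - cproj a z)) (\<beta> *\<^sub>C (z - cproj a z)))"
    by (simp add: power2_norm_eq_cinner cinner_add_left cinner_add_right cinner_scaleC_left
        cinner_scaleC_right cinner_cproj_diff_cproj cinner_diff_cproj_cproj)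
  also have "\<dots> = (norm (\<alpha> *\<^sub>C cproj a y))\<^sup>2 + (norm (\<beta> *\<^sub>C (z - cproj a z)))\<^sup>2"
    by (simp add: power2_norm_eq_cinner)
  finally show ?thesis by (simp add: norm_scaleC power_mult_distrib)
qed

lemma power2_norm_eq_cproj_add: "(norm w)\<^sup>2 = (norm (cproj a w))\<^sup>2 + (norm (w - cproj a w))\<^sup>2"
  using power2_norm_cproj_split[of 1 a w 1 w] by (simp add: scaleC_one)

section \<open>The Moebius map and the invariant gradient\<close>

definition moebius_linear_part :: "'a::chilbert_space \<Rightarrow> 'a \<Rightarrow> 'a" where
  "moebius_linear_part a z =
     complex_of_real (sqrt (1 - (norm a)\<^sup>2)) *\<^sub>C (z - cproj a z) + cproj a z"

lemma bounded_linear_moebius_linear_part: "bounded_linear (moebius_linear_part a)"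
  unfolding moebius_linear_part_def
  by (intro bounded_linear_add bounded_linear_cproj bounded_linear_sub bounded_linear_ident
      bounded_linear_compose[OF bounded_bilinear.bounded_linear_right[OF bounded_bilinear_scaleC]])

lemma cinner_moebius_linear_part_left:
  "cinner (moebius_linear_part a z) u = cinner z (moebius_linear_part a u)"
  by (simp add: moebius_linear_part_def cinner_add_left cinner_add_right cinner_scaleC_left
      cinner_scaleC_right cinner_diff_left cinner_diff_right cinner_cproj_left)

lemma moebius_zero: "moebius a 0 = a"
  by (simp add: moebius_def scaleC_one Let_def)

lemma has_derivative_moebius_zero:
  "(moebius a has_derivative (\<lambda>v. moebius_linear_part a (cinner v a *\<^sub>C a - v))) (at 0)"
proof -
  have "((\<lambda>y. inverse (1 - cinner y a)) has_derivative
          (\<lambda>h. - (inverse (1 - cinner 0 a) * (0 - cinner h a) * inverse (1 - cinner 0 a)))) (at 0)"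
    by (intro Deriv.has_derivative_inverse has_derivative_diff has_derivative_const
          bounded_linear.has_derivative[OF bounded_linear_cinner_left] has_derivative_ident) simp
  then have "((\<lambda>y. inverse (1 - cinner y a) *\<^sub>C (a - y)) has_derivative
          (\<lambda>h. inverse (1 - cinner 0 a) *\<^sub>C (0 - h) +
               (- (inverse (1 - cinner 0 a) * (0 - cinner h a) * inverse (1 - cinner 0 a))) *\<^sub>C (a - 0))) (at 0)"
    by (rule bounded_bilinear.FDERIV[OF bounded_bilinear_scaleC])
       (intro has_derivative_diff has_derivative_const has_derivative_ident)
  then have "((\<lambda>y. moebius_linear_part a (inverse (1 - cinner y a) *\<^sub>C (a - y))) has_derivative
          (\<lambda>v. moebius_linear_part a (cinner v a *\<^sub>C a - v))) (at 0)"
    by (rule bounded_linear.has_derivative[OF bounded_linear_moebius_linear_part, THEN has_derivative_eq_rhs])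
       (simp add: fun_eq_iff scaleC_one scaleC_minus_right)
  moreover have "moebius a = (\<lambda>y. moebius_linear_part a (inverse (1 - cinner y a) *\<^sub>C (a - y)))"
    by (simp add: moebius_def moebius_linear_part_def Let_def fun_eq_iff divide_inverse)
  ultimately show ?thesis by simp
qed

text \<open>The left-hand side is the adjoint of the derivative of \<open>moebius a\<close> at \<open>0\<close>, applied to \<open>u\<close>.\<close>

lemma adjoint_moebius_derivative_eq:
  "cinner (moebius_linear_part a u) a *\<^sub>C a - moebius_linear_part a u =
     - (complex_of_real (1 - (norm a)\<^sup>2) *\<^sub>C cproj a u
        + complex_of_real (sqrt (1 - (norm a)\<^sup>2)) *\<^sub>C (u - cproj a u))"
proof -
  define p where "p = cproj a u"
  define s where "s = complex_of_real (sqrt (1 - (norm a)\<^sup>2))"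
  define c where "c = complex_of_real ((norm a)\<^sup>2)"
  have "cproj a (moebius_linear_part a u) = p"
    by (simp add: moebius_linear_part_def cproj_add cproj_scaleC p_def)
  then have "cinner (moebius_linear_part a u) a = cinner u a"
    by (metis cinner_cproj_self p_def)
  then have "cinner (moebius_linear_part a u) a *\<^sub>C a - moebius_linear_part a u
      = c *\<^sub>C p - (s *\<^sub>C (u - p) + p)"
    by (simp add: scaleC_cinner_eq_cproj moebius_linear_part_def c_def s_def p_def)
  also have "\<dots> = - ((1 - c) *\<^sub>C p + s *\<^sub>C (u - p))"
    by (simp add: scaleC_diff_left scaleC_diff_right scaleC_one algebra_simps)
  finally show ?thesis by (simp add: p_def s_def c_def)
qed

lemma inv_grad_eq:
  assumes B: "orthonormal_basis B" and "(f has_derivative (\<lambda>y. cinner y u)) (at x)"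
  shows "inv_grad B f x = cconj B (- (complex_of_real (1 - (norm x)\<^sup>2) *\<^sub>C cproj x u
    + complex_of_real (sqrt (1 - (norm x)\<^sup>2)) *\<^sub>C (u - cproj x u)))"
    (is "_ = cconj B ?L")
  unfolding inv_grad_def
proof (rule hol_grad_eqI[OF B])
  have "((f \<circ> moebius x) has_derivative
      (\<lambda>v. cinner (moebius_linear_part x (cinner v x *\<^sub>C x - v)) u)) (at 0)"
    using diff_chain_at[OF has_derivative_moebius_zero, of f] assms(2)
    by (simp add: moebius_zero o_def)
  moreover have "cinner (moebius_linear_part x (cinner v x *\<^sub>C x - v)) u
      = cinner v (cinner (moebius_linear_part x u) x *\<^sub>C x - moebius_linear_part x u)" for v
    by (simp add: cinner_moebius_linear_part_left cinner_diff_left cinner_diff_right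
        cinner_scaleC_left cinner_scaleC_right cinner_commute[of x "moebius_linear_part x u"])
  ultimately show "((f \<circ> moebius x) has_derivative (\<lambda>y. cinner y ?L)) (at 0)"
    by (simp add: adjoint_moebius_derivative_eq)
qed

section \<open>A weighted dual norm\<close>

lemma weighted_dual_norm_bound:
  assumes "r > 0"
  shows "cmod (cinner w u) * r \<le>
    sqrt (r\<^sup>2 * (norm (cproj a u))\<^sup>2 + r * (norm (u - cproj a u))\<^sup>2) *
    sqrt ((norm (cproj a w))\<^sup>2 + r * (norm (w - cproj a w))\<^sup>2)"
proof -
  define \<alpha> \<gamma> p q where "\<alpha> = norm (cproj a w)" and "\<gamma> = norm (w - cproj a w)"
    and "p = norm (cproj a u)" and "q = norm (u - cproj a u)"
  have "cmod (cinner w u) \<le> cmod (cinner (cproj a w) (cproj a u))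
      + cmod (cinner (w - cproj a w) (u - cproj a u))"
    by (subst cinner_cproj_split) (rule norm_triangle_ineq)
  also have "\<dots> \<le> \<alpha> * p + \<gamma> * q"
    unfolding \<alpha>_def \<gamma>_def p_def q_def by (intro add_mono Cauchy_Schwarz_cinner)
  finally have "cmod (cinner w u) * r \<le> (\<alpha> * p + \<gamma> * q) * r"
    using assms by (simp add: mult_right_mono)
  also have "\<dots> \<le> sqrt ((r\<^sup>2 * p\<^sup>2 + r * q\<^sup>2) * (\<alpha>\<^sup>2 + r * \<gamma>\<^sup>2))"
  proof (rule real_le_rsqrt)
    \<comment> \<open>Lagrange's identity for the vectors \<open>(\<alpha>, \<surd>r \<gamma>)\<close> and \<open>(r p, \<surd>r q)\<close>\<close>
    have "(r\<^sup>2 * p\<^sup>2 + r * q\<^sup>2) * (\<alpha>\<^sup>2 + r * \<gamma>\<^sup>2) - ((\<alpha> * p + \<gamma> * q) * r)\<^sup>2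
        = r * (r * p * \<gamma> - q * \<alpha>)\<^sup>2"
      by (simp add: power2_eq_square algebra_simps)
    moreover have "r * (r * p * \<gamma> - q * \<alpha>)\<^sup>2 \<ge> 0"
      using assms by simp
    ultimately show "((\<alpha> * p + \<gamma> * q) * r)\<^sup>2 \<le> (r\<^sup>2 * p\<^sup>2 + r * q\<^sup>2) * (\<alpha>\<^sup>2 + r * \<gamma>\<^sup>2)"
      by linarith
  qed
  finally show ?thesis by (simp add: real_sqrt_mult \<alpha>_def \<gamma>_def p_def q_def)
qed

lemma weighted_dual_norm_attained:
  assumes "r > 0" and "u \<noteq> 0"
  obtains w where "w \<noteq> 0" and "cmod (cinner w u) * r =
    sqrt (r\<^sup>2 * (norm (cproj a u))\<^sup>2 + r * (norm (u - cproj a u))\<^sup>2) *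
    sqrt ((norm (cproj a w))\<^sup>2 + r * (norm (w - cproj a w))\<^sup>2)"
proof -
  define p q where "p = norm (cproj a u)" and "q = norm (u - cproj a u)"
  define K where "K = p\<^sup>2 + q\<^sup>2 / r"
  define w where "w = cproj a u + complex_of_real (1 / r) *\<^sub>C (u - cproj a u)"
  have "(norm u)\<^sup>2 > 0"
    using assms(2) by simp
  then have "p\<^sup>2 + q\<^sup>2 > 0"
    using power2_norm_eq_cproj_add[of u a] by (simp add: p_def q_def)
  then have K: "K > 0"
    using assms(1) by (cases "q = 0") (simp_all add: K_def add_nonneg_pos)
  have Pw: "cproj a w = cproj a u"
    by (simp add: w_def cproj_add cproj_scaleC)
  have Qw: "w - cproj a u = complex_of_real (1 / r) *\<^sub>C (u - cproj a u)"
    by (simp add: w_def)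
  have wu: "cinner w u = complex_of_real K"
    using cinner_cproj_split[of w u a]
    by (simp add: Pw Qw cinner_scaleC_left cinner_self_eq_power2_norm K_def p_def q_def)
  have "(norm (cproj a w))\<^sup>2 + r * (norm (w - cproj a w))\<^sup>2 = K"
    using assms(1)
    by (simp add: Pw Qw norm_scaleC norm_divide K_def p_def q_def power2_eq_square field_simps)
  moreover have "r\<^sup>2 * p\<^sup>2 + r * q\<^sup>2 = r\<^sup>2 * K"
    using assms(1) by (simp add: K_def field_simps power2_eq_square)
  ultimately have "cmod (cinner w u) * r =
      sqrt (r\<^sup>2 * p\<^sup>2 + r * q\<^sup>2) * sqrt ((norm (cproj a w))\<^sup>2 + r * (norm (w - cproj a w))\<^sup>2)"
    using assms(1) K by (simp add: wu real_sqrt_mult power2_eq_square)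
  moreover have "w \<noteq> 0"
    using wu K by auto
  ultimately show ?thesis
    using that by (simp add: p_def q_def)
qed

lemma SUP_weighted_dual_norm:
  fixes u a :: "'a::chilbert_space"
  assumes "r > 0" and "\<exists>w::'a. w \<noteq> 0"
  shows "(SUP w\<in>{w. w \<noteq> 0}. cmod (cinner w u) * r /
      sqrt ((norm (cproj a w))\<^sup>2 + r * (norm (w - cproj a w))\<^sup>2)) =
    sqrt (r\<^sup>2 * (norm (cproj a u))\<^sup>2 + r * (norm (u - cproj a u))\<^sup>2)"
    (is "(SUP w\<in>_. ?t w) = ?N")
proof (rule cSup_eq_maximum)
  have den_pos: "sqrt ((norm (cproj a w))\<^sup>2 + r * (norm (w - cproj a w))\<^sup>2) > 0"
    if "w \<noteq> 0" for w
    using that assms(1) power2_norm_eq_cproj_add[of w a]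
    by (cases "w - cproj a w = 0") (simp_all add: add_nonneg_pos)
  show "?N \<in> ?t ` {w. w \<noteq> 0}"
  proof (cases "u = 0")
    case True
    then show ?thesis using assms(2) by (auto simp: cproj_def image_iff)
  next
    case False
    then obtain w where "w \<noteq> 0" and "cmod (cinner w u) * r = ?N *
        sqrt ((norm (cproj a w))\<^sup>2 + r * (norm (w - cproj a w))\<^sup>2)"
      using weighted_dual_norm_attained[OF assms(1)] by blast
    then show ?thesis
      using den_pos[of w] by (auto simp: image_iff intro!: bexI[of _ w])
  qed
  show "y \<le> ?N" if "y \<in> ?t ` {w. w \<noteq> 0}" for y
    using that weighted_dual_norm_bound[OF assms(1)] den_pos
    by (auto simp: pos_divide_le_eq)
qed

lemma weighted_norm_eq_cproj_split:
  "(1 - (norm a)\<^sup>2) * (norm w)\<^sup>2 + (cmod (cinner w a))\<^sup>2 =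
     (norm (cproj a w))\<^sup>2 + (1 - (norm a)\<^sup>2) * (norm (w - cproj a w))\<^sup>2"
  using power2_norm_eq_cproj_add[of w a] power2_norm_mult_cproj[of a w]
  by (simp add: algebra_simps)

theorem lemma2p1:
  fixes f :: "'a::chilbert_space \<Rightarrow> complex" and B :: "'a set" and x :: 'a
  assumes "orthonormal_basis B"
    and "\<exists>w::'a. w \<noteq> 0"
    and "analytic_on_ball f"
    and "norm x < 1"
  shows "norm (inv_grad B f x) =
    (SUP w\<in>{w::'a. w \<noteq> 0}.
       cmod (cinner (hol_grad B f x) (cconj B w)) * (1 - (norm x)\<^sup>2) /
       sqrt ((1 - (norm x)\<^sup>2) * (norm w)\<^sup>2 + (cmod (cinner w x))\<^sup>2))"
proof -
  note B = assms(1)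
  define r where "r = 1 - (norm x)\<^sup>2"
  have r: "r > 0"
    using assms(4) by (simp add: r_def abs_square_less_1)
  obtain D where D: "(f has_derivative D) (at x)" and hom: "\<And>c y. D (c *\<^sub>C y) = c * D y"
    using assms(3,4) unfolding analytic_on_ball_def by blast
  obtain u where "\<And>y. D y = cinner y u"
    using complex_linear_functional_representation[OF B has_derivative_bounded_linear[OF D] hom]
    by blast
  then have "D = (\<lambda>y. cinner y u)"
    by (simp add: fun_eq_iff)
  then have fu: "(f has_derivative (\<lambda>y. cinner y u)) (at x)"
    using D by simp
  have "norm (inv_grad B f x) = sqrt (r\<^sup>2 * (norm (cproj x u))\<^sup>2 + r * (norm (u - cproj x u))\<^sup>2)"
    using power2_norm_cproj_split[of "complex_of_real r" x u "complex_of_real (sqrt r)" u] r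
    by (simp only: inv_grad_eq[OF B fu] norm_cconj[OF B] norm_minus_cancel flip: r_def)
       (simp add: real_sqrt_unique)
  also have "\<dots> = (SUP w\<in>{w::'a. w \<noteq> 0}. cmod (cinner w u) * r /
      sqrt ((norm (cproj x w))\<^sup>2 + r * (norm (w - cproj x w))\<^sup>2))"
    by (rule SUP_weighted_dual_norm[OF r assms(2), symmetric])
  finally show ?thesis
    by (simp add: hol_grad_eqI[OF B fu] cinner_cconj[OF B]
        weighted_norm_eq_cproj_split[of x, folded r_def] flip: r_def)
qed

end
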